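(* With $R_n^{(\mathbf z)}$ and $W^{(\mathbf z)}$ as defined below, the entanglement witness $W^{(\mathbf z)}$ (equivalently, the positive map $R_n^{(\mathbf z)}$) is optimal if and only if $|z_{ij}|=1$ for all $i\ne j$.
   Context: Let $n\ge2$, $z_{ij}\in\mathbb{C}$ for $1\le i<j\le n$ with $|z_{ij}|\le1$, $z_{ji}=\overline{z_{ij}}$. $e_{ij}=|e_i\rangle\langle e_j|$ for the standard basis of $\mathbb{C}^n$. $R_n^{(\mathbf z)}:M_n(\mathbb{C})\to M_n(\mathbb{C})$ is the linear map with $R_n^{(\mathbf z)}(e_{ii})=\frac{1}{n-1}(\mathbb{I}_n-e_{ii})$ and $R_n^{(\mathbf z)}(e_{ij})=-\frac{z_{ij}}{n-1}e_{ij}$ for $i\ne j$ (it is a positive map), and $W^{(\mathbf z)}=\frac1n\sum_{i,j}e_{ij}\otimes R_n^{(\mathbf z)}(e_{ij})$. A Hermitian $W$ on $\mathbb{C}^n\otimes\mathbb{C}^n$ is an entanglement witness if $\langle x\otimes y|W|x\otimes y\rangle\ge0$ for all product vectors and $W$ is not positive semidefinite; it is optimal if for every nonzero positive semidefinite $Q$, $W-Q$ is not an entanglement witness. A positive map is called optimal if its Choi witness is optimal. *)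

theory Defs
  imports "HOL-Analysis.Analysis"
begin

text \<open>Matrices on C^n are indexed by a finite type 'n (n = CARD('n));
  matrices on C^n (x) C^n are indexed by the pair type 'n \<times> 'n, with
  (x \<otimes> y) at index (i,k) equal to x_i y_k.\<close>

type_synonym 'n cmat = "complex ^ 'n ^ 'n"

definition unit_mat :: "'n::finite \<Rightarrow> 'n \<Rightarrow> 'n cmat" where
  "unit_mat i j = (\<chi> k l. if k = i \<and> l = j then 1 else 0)"

definition tensor_vec :: "complex ^ 'n::finite \<Rightarrow> complex ^ 'm::finite \<Rightarrow> complex ^ ('n \<times> 'm)" where
  "tensor_vec x y = (\<chi> p. x $ fst p * y $ snd p)"

definition qform :: "complex ^ 'a::finite ^ 'a \<Rightarrow> complex ^ 'a \<Rightarrow> complex" where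
  "qform A v = (\<Sum>a\<in>UNIV. \<Sum>b\<in>UNIV. cnj (v $ a) * A $ a $ b * v $ b)"

definition hermitian_mat :: "complex ^ 'a::finite ^ 'a \<Rightarrow> bool" where
  "hermitian_mat A \<longleftrightarrow> (\<forall>a b. A $ a $ b = cnj (A $ b $ a))"

definition psd_mat :: "complex ^ 'a::finite ^ 'a \<Rightarrow> bool" where
  "psd_mat A \<longleftrightarrow> hermitian_mat A \<and> (\<forall>v. qform A v \<in> \<real> \<and> Re (qform A v) \<ge> 0)"

definition ent_witness :: "complex ^ ('n::finite \<times> 'n) ^ ('n \<times> 'n) \<Rightarrow> bool" where
  "ent_witness W \<longleftrightarrow> hermitian_mat W
     \<and> (\<forall>x y. Re (qform W (tensor_vec x y)) \<ge> 0)
     \<and> \<not> psd_mat W"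

definition optimal_witness :: "complex ^ ('n::finite \<times> 'n) ^ ('n \<times> 'n) \<Rightarrow> bool" where
  "optimal_witness W \<longleftrightarrow> ent_witness W
     \<and> (\<forall>Q. psd_mat Q \<and> Q \<noteq> 0 \<longrightarrow> \<not> ent_witness (W - Q))"

text \<open>The linear map R_n^(z), given by its values on the matrix units:
  R(e_ii) = (I - e_ii)/(n-1), R(e_ij) = -z_ij e_ij/(n-1) for i \<noteq> j.\<close>
definition R_map :: "('n::finite \<Rightarrow> 'n \<Rightarrow> complex) \<Rightarrow> 'n cmat \<Rightarrow> 'n cmat" where
  "R_map z X = (\<chi> k l. if k = l
      then ((\<Sum>i\<in>UNIV. X $ i $ i) - X $ k $ k) / (of_nat CARD('n) - 1)
      else - z k l * X $ k $ l / (of_nat CARD('n) - 1))"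

text \<open>Choi witness W^(z) = (1/n) \<Sum>_{i,j} e_ij \<otimes> R(e_ij).\<close>
definition W_z :: "('n::finite \<Rightarrow> 'n \<Rightarrow> complex) \<Rightarrow> complex ^ ('n \<times> 'n) ^ ('n \<times> 'n)" where
  "W_z z = (\<chi> p q. (R_map z (unit_mat (fst p) (fst q))) $ snd p $ snd q / of_nat CARD('n))"

end

theory Submission
  imports Defs
begin

text \<open>
  Up to the factor 1/(n(n-1)), W^(z) is the matrix
    sum over i \<noteq> k of d_ik |ik><ik|  minus  sum over i \<noteq> j of z_ij |ii><jj|
  with all weights d_ik = 1 (here called witness_core).  Its form on a product vector
  x \<otimes> y is explicit, and a weighted AM-GM bound shows block positivity whenever
  |z_ij|^2 \<le> d_ij d_ji.  Both directions of the theorem follow from this: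
  \<^item> if some |z_pq| < 1, the weight d_pq can be lowered to |z_pq|^2 without losing
    block positivity, i.e. a nonzero multiple of |pq><pq| can be subtracted, so W^(z) is not
    optimal;
  \<^item> if all |z_ij| = 1, W^(z) vanishes on the product vectors
    (e_p + s e_q) \<otimes> (e_p + conj(z_pq s) e_q); any positive Q with W^(z) - Q block positive
    annihilates them (the kernel of a positive matrix is the zero set of its form), and these
    vectors span enough to force Q = 0.
  The file first collects generic facts on sums, forms and positive matrices, then studies
  the core matrix, and finally derives the theorem.
\<close>

lemma sum_UNIV_pair:
  "(\<Sum>p\<in>(UNIV::('a::finite \<times> 'b::finite) set). f p) = (\<Sum>i\<in>UNIV. \<Sum>k\<in>UNIV. f (i, k))"
  by (subst UNIV_Times_UNIV[symmetric]) (simp add: sum.cartesian_product)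

lemma sum_UNIV_pair_diagonal:
  fixes f :: "'a::finite \<times> 'a \<Rightarrow> 'c::comm_monoid_add"
  assumes "\<And>i k. i \<noteq> k \<Longrightarrow> f (i, k) = 0"
  shows "(\<Sum>p\<in>UNIV. f p) = (\<Sum>i\<in>UNIV. f (i, i))"
proof -
  have "(\<Sum>k\<in>UNIV. f (i, k)) = f (i, i)" for i
  proof -
    have "(\<Sum>k\<in>UNIV. f (i, k)) = (\<Sum>k\<in>UNIV. if k = i then f (i, i) else 0)"
      using assms by (intro sum.cong refl) auto
    then show ?thesis by simp
  qed
  then show ?thesis by (simp add: sum_UNIV_pair)
qed

lemma sum_UNIV_two:
  fixes g :: "'a::finite \<Rightarrow> 'c::comm_monoid_add"
  assumes "p \<noteq> q" and "\<And>i. i \<noteq> p \<Longrightarrow> i \<noteq> q \<Longrightarrow> g i = 0"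
  shows "sum g UNIV = g p + g q"
proof -
  have "sum g UNIV = sum g {p, q}"
    by (rule sum.mono_neutral_right) (use assms in auto)
  then show ?thesis using assms by simp
qed

lemma sum_UNIV_two_square:
  fixes f :: "'a::finite \<Rightarrow> 'a \<Rightarrow> 'c::comm_monoid_add"
  assumes pq: "p \<noteq> q"
    and outside: "\<And>i k. (i \<noteq> p \<and> i \<noteq> q) \<or> (k \<noteq> p \<and> k \<noteq> q) \<Longrightarrow> f i k = 0"
  shows "(\<Sum>i\<in>UNIV. \<Sum>k\<in>UNIV. f i k) = f p p + f p q + (f q p + f q q)"
proof -
  have rows: "(\<Sum>k\<in>UNIV. f i k) = f i p + f i q" for i
    by (rule sum_UNIV_two[OF pq]) (simp add: outside)
  show ?thesis
    unfolding rows by (rule sum_UNIV_two[OF pq]) (simp add: outside)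
qed

lemma exists_other:
  assumes "CARD('n::finite) \<ge> 2"
  shows "\<exists>q::'n. q \<noteq> p"
proof (rule ccontr)
  assume "\<not> (\<exists>q::'n. q \<noteq> p)"
  then have "(UNIV::'n set) = {p}" by auto
  then have "CARD('n) = card {p}" by (simp only:)
  then show False using assms by simp
qed

lemma cnj_mult_self: "cnj w * w = complex_of_real ((cmod w)\<^sup>2)"
  by (metis complex_norm_square mult.commute)

lemma qform_add: "qform (A + B) v = qform A v + qform B v"
  unfolding qform_def by (simp add: algebra_simps sum.distrib)

lemma qform_diff: "qform (A - B) v = qform A v - qform B v"
  unfolding qform_def by (simp add: algebra_simps sum_subtractf)

lemma qform_scaleR: "qform (r *\<^sub>R A) v = of_real r * qform A v"
  unfolding qform_def vector_scaleR_component unfolding scaleR_conv_of_real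
  by (simp add: sum_distrib_left algebra_simps)

lemma hermitian_add:
  assumes "hermitian_mat A" and "hermitian_mat B"
  shows "hermitian_mat (A + B)"
  unfolding hermitian_mat_def
proof (intro allI)
  fix a b
  have "A $ a $ b = cnj (A $ b $ a)" "B $ a $ b = cnj (B $ b $ a)"
    using assms unfolding hermitian_mat_def by blast+
  then show "(A + B) $ a $ b = cnj ((A + B) $ b $ a)" by simp
qed

lemma hermitian_scaleR:
  assumes "hermitian_mat A"
  shows "hermitian_mat (r *\<^sub>R A)"
  unfolding hermitian_mat_def
proof (intro allI)
  fix a b
  have "A $ a $ b = cnj (A $ b $ a)" using assms unfolding hermitian_mat_def by blast
  then show "(r *\<^sub>R A) $ a $ b = cnj ((r *\<^sub>R A) $ b $ a)"
    unfolding vector_scaleR_component by (simp add: scaleR_conv_of_real[where 'a=complex])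
qed

lemma psd_add: "psd_mat A \<Longrightarrow> psd_mat B \<Longrightarrow> psd_mat (A + B)"
  unfolding psd_mat_def by (auto simp: hermitian_add qform_add)

definition point_mat :: "'a::finite \<Rightarrow> real \<Rightarrow> complex ^ 'a ^ 'a" where
  "point_mat a e = (\<chi> b c. if b = a \<and> c = a then complex_of_real e else 0)"

lemma qform_point_mat: "qform (point_mat a e) v = complex_of_real (e * (cmod (v $ a))\<^sup>2)"
proof -
  have row: "(\<Sum>c\<in>UNIV. cnj (v $ b) * point_mat a e $ b $ c * v $ c)
      = (if b = a then complex_of_real e * (cnj (v $ a) * v $ a) else 0)" for b
  proof (cases "b = a")
    case True
    then have "(\<Sum>c\<in>UNIV. cnj (v $ b) * point_mat a e $ b $ c * v $ c)
        = (\<Sum>c\<in>UNIV. if c = a then complex_of_real e * (cnj (v $ a) * v $ a) else 0)"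
      by (intro sum.cong refl) (simp add: point_mat_def)
    with True show ?thesis by simp
  qed (simp add: point_mat_def)
  have "qform (point_mat a e) v = complex_of_real e * (cnj (v $ a) * v $ a)"
    unfolding qform_def row by simp
  then show ?thesis by (simp only: cnj_mult_self of_real_mult)
qed

lemma psd_point_mat: "e \<ge> 0 \<Longrightarrow> psd_mat (point_mat a e)"
  unfolding psd_mat_def hermitian_mat_def qform_point_mat
  by (simp add: point_mat_def)

lemma point_mat_nonzero: "e \<noteq> 0 \<Longrightarrow> point_mat a e \<noteq> 0"
  by (auto simp: point_mat_def vec_eq_iff)

lemma scaleR_point_mat: "r *\<^sub>R point_mat a e = point_mat a (r * e)"
  by (simp add: vec_eq_iff point_mat_def scaleR_conv_of_real[where 'a=complex])

text \<open>The kernel of a positive semidefinite matrix is the zero set of its form: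
  if v^* Q v \<le> 0 then Q v = 0.  Perturbing v in the direction -Q v gives a real quadratic
  r^2 q - 2 r |Q v|^2 that must stay nonnegative, forcing |Q v| = 0.\<close>
lemma hermitian_form_swap:
  assumes "hermitian_mat Q"
  shows "(\<Sum>a\<in>UNIV. cnj (v $ a) * (Q *v u) $ a) = cnj (\<Sum>a\<in>UNIV. cnj (u $ a) * (Q *v v) $ a)"
proof -
  have "(\<Sum>a\<in>UNIV. cnj (v $ a) * (Q *v u) $ a) = (\<Sum>a\<in>UNIV. \<Sum>b\<in>UNIV. cnj (v $ a) * Q $ a $ b * u $ b)"
    unfolding matrix_vector_mult_def by (simp add: sum_distrib_left mult.assoc)
  also have "\<dots> = (\<Sum>b\<in>UNIV. \<Sum>a\<in>UNIV. cnj (cnj (u $ b) * Q $ b $ a * v $ a))"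
  proof (subst sum.swap, intro sum.cong refl)
    fix a b
    have "Q $ a $ b = cnj (Q $ b $ a)" using assms unfolding hermitian_mat_def by blast
    then show "cnj (v $ a) * Q $ a $ b * u $ b = cnj (cnj (u $ b) * Q $ b $ a * v $ a)"
      by (simp add: mult.commute mult.left_commute)
  qed
  also have "\<dots> = cnj (\<Sum>a\<in>UNIV. cnj (u $ a) * (Q *v v) $ a)"
    unfolding matrix_vector_mult_def by (simp add: sum_distrib_left mult.assoc)
  finally show ?thesis .
qed

lemma nonneg_quadratic_no_linear_term:
  fixes S q :: real
  assumes "q \<ge> 0" and nonneg: "\<And>r. 0 \<le> r\<^sup>2 * q - 2 * r * S"
  shows "S \<le> 0"
proof (rule ccontr)
  assume "\<not> S \<le> 0"
  then have "S > 0" by simp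
  define r where "r = S / (q + 1)"
  have "r > 0" using \<open>S > 0\<close> \<open>q \<ge> 0\<close> by (simp add: r_def)
  have "r * q = S * (q / (q + 1))" by (simp add: r_def)
  also have "\<dots> < S * 2"
    using \<open>S > 0\<close> \<open>q \<ge> 0\<close> by (intro mult_strict_left_mono) (simp_all add: divide_simps)
  finally have "r * q < 2 * S" by simp
  have "r\<^sup>2 * q - 2 * r * S = r * (r * q - 2 * S)" by (simp add: power2_eq_square algebra_simps)
  also have "\<dots> < 0" using \<open>r > 0\<close> \<open>r * q < 2 * S\<close> by (simp add: mult_pos_neg)
  finally have "r\<^sup>2 * q - 2 * r * S < 0" .
  with nonneg[of r] show False by simp
qed

lemma qform_perturb:
  "qform A (\<chi> a. v $ a - complex_of_real r * u $ a)
     = qform A v - complex_of_real r * (\<Sum>a\<in>UNIV. cnj (v $ a) * (A *v u) $ a)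
       - complex_of_real r * (\<Sum>a\<in>UNIV. cnj (u $ a) * (A *v v) $ a)
       + complex_of_real (r\<^sup>2) * qform A u"
  unfolding qform_def matrix_vector_mult_def
  by (simp add: algebra_simps sum.distrib sum_subtractf sum_distrib_left power2_eq_square)

lemma psd_kernel:
  assumes psd: "psd_mat Q" and nonpos: "Re (qform Q v) \<le> 0"
  shows "Q *v v = 0"
proof -
  have "Im (qform Q v) = 0" and "Re (qform Q v) \<ge> 0"
    using psd by (auto simp: psd_mat_def complex_is_Real_iff)
  then have zero: "qform Q v = 0" using nonpos by (simp add: complex_eq_iff)
  define u where "u = Q *v v"
  define S where "S = (\<Sum>a\<in>UNIV. (cmod (u $ a))\<^sup>2)"
  have herm: "hermitian_mat Q" using psd by (simp add: psd_mat_def)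
  have u_form: "(\<Sum>a\<in>UNIV. cnj (u $ a) * (Q *v v) $ a) = complex_of_real S"
    unfolding S_def u_def[symmetric] by (simp only: cnj_mult_self of_real_sum)
  have v_form: "(\<Sum>a\<in>UNIV. cnj (v $ a) * (Q *v u) $ a) = complex_of_real S"
    using hermitian_form_swap[OF herm, of v u] u_form by simp
  have "0 \<le> r\<^sup>2 * Re (qform Q u) - 2 * r * S" for r
  proof -
    have "0 \<le> Re (qform Q (\<chi> a. v $ a - complex_of_real r * u $ a))"
      using psd by (simp add: psd_mat_def)
    also have "\<dots> = r\<^sup>2 * Re (qform Q u) - 2 * r * S"
      unfolding qform_perturb zero u_form v_form by simp
    finally show ?thesis .
  qed
  then have "S \<le> 0"
    using psd by (intro nonneg_quadratic_no_linear_term[of "Re (qform Q u)"]) (auto simp: psd_mat_def)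
  moreover have "S \<ge> 0" unfolding S_def by (simp add: sum_nonneg)
  ultimately have "(\<Sum>a\<in>UNIV. (cmod (u $ a))\<^sup>2) = 0" unfolding S_def by simp
  then have "\<forall>a\<in>UNIV. (cmod (u $ a))\<^sup>2 = 0" by (simp add: sum_nonneg_eq_0_iff)
  then show ?thesis by (simp add: u_def vec_eq_iff)
qed

definition diag_mat :: "('a::finite \<Rightarrow> complex) \<Rightarrow> complex ^ 'a ^ 'a" where
  "diag_mat f = (\<chi> b c. if b = c then f b else 0)"

lemma qform_diag_mat: "qform (diag_mat f) v = (\<Sum>a\<in>UNIV. f a * (cnj (v $ a) * v $ a))"
  unfolding qform_def diag_mat_def
  by (intro sum.cong refl) (simp add: if_distrib if_distribR algebra_simps cong: if_cong)

lemma hermitian_diag_mat: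
  assumes "\<And>a. cnj (f a) = f a"
  shows "hermitian_mat (diag_mat f)"
  unfolding hermitian_mat_def diag_mat_def using assms by (simp add: eq_commute[of _ "cnj _"])

definition diagonal_coupling ::
    "('n::finite \<Rightarrow> 'n \<Rightarrow> complex) \<Rightarrow> complex ^ ('n \<times> 'n) ^ ('n \<times> 'n)" where
  "diagonal_coupling g = (\<chi> b c. if fst b = snd b \<and> fst c = snd c then g (fst b) (fst c) else 0)"

lemma qform_diagonal_coupling:
  "qform (diagonal_coupling g) v = (\<Sum>i\<in>UNIV. \<Sum>j\<in>UNIV. cnj (v $ (i, i)) * g i j * v $ (j, j))"
proof -
  have "qform (diagonal_coupling g) v
      = (\<Sum>p\<in>UNIV. \<Sum>q\<in>UNIV. cnj (v $ p) * diagonal_coupling g $ p $ q * v $ q)"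
    by (simp add: qform_def)
  also have "\<dots> = (\<Sum>i\<in>UNIV. \<Sum>q\<in>UNIV. cnj (v $ (i, i)) * diagonal_coupling g $ (i, i) $ q * v $ q)"
    by (rule sum_UNIV_pair_diagonal) (simp add: diagonal_coupling_def)
  also have "\<dots> = (\<Sum>i\<in>UNIV. \<Sum>j\<in>UNIV. cnj (v $ (i, i)) * g i j * v $ (j, j))"
    by (intro sum.cong refl, subst sum_UNIV_pair_diagonal) (simp_all add: diagonal_coupling_def)
  finally show ?thesis .
qed

lemma hermitian_diagonal_coupling:
  fixes g :: "'n::finite \<Rightarrow> 'n \<Rightarrow> complex"
  assumes "\<And>i j. g j i = cnj (g i j)"
  shows "hermitian_mat (diagonal_coupling g)"
  unfolding hermitian_mat_def
proof (intro allI)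
  fix b c :: "'n \<times> 'n"
  have "g (fst b) (fst c) = cnj (g (fst c) (fst b))" using assms[of "fst c" "fst b"] by simp
  then show "diagonal_coupling g $ b $ c = cnj (diagonal_coupling g $ c $ b)"
    by (auto simp: diagonal_coupling_def)
qed

definition witness_core ::
    "('n::finite \<Rightarrow> 'n \<Rightarrow> real) \<Rightarrow> ('n \<Rightarrow> 'n \<Rightarrow> complex) \<Rightarrow> complex ^ ('n \<times> 'n) ^ ('n \<times> 'n)" where
  "witness_core d z =
     diag_mat (\<lambda>b. if fst b \<noteq> snd b then complex_of_real (d (fst b) (snd b)) else 0)
     + diagonal_coupling (\<lambda>i j. if i \<noteq> j then - z i j else 0)"

lemma witness_core_entry:
  "witness_core d z $ (i, k) $ (j, l)
     = (if i = j \<and> k = l \<and> i \<noteq> k then complex_of_real (d i k) else 0)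
     + (if i = k \<and> j = l \<and> i \<noteq> j then - z i j else 0)"
  unfolding witness_core_def diag_mat_def diagonal_coupling_def vector_add_component
    vec_lambda_beta fst_conv snd_conv prod.inject
  by (cases "i = j"; cases "k = l"; cases "i = k"; simp)

lemma hermitian_witness_core:
  assumes "\<And>i j. i \<noteq> j \<Longrightarrow> z j i = cnj (z i j)"
  shows "hermitian_mat (witness_core d z)"
  unfolding witness_core_def
proof (intro hermitian_add hermitian_diag_mat hermitian_diagonal_coupling)
  show "(if j \<noteq> i then - z j i else 0) = cnj (if i \<noteq> j then - z i j else 0)" for i j
    using assms[of i j] by auto
qed simp

lemma trace_unit_mat: "(\<Sum>m\<in>UNIV. unit_mat i j $ m $ m) = (if i = j then 1 else 0)"
proof -
  have "(\<Sum>m\<in>UNIV. unit_mat i j $ m $ m) = (\<Sum>m\<in>UNIV. if m = i then (if i = j then 1 else 0) else 0)"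
    unfolding unit_mat_def by (intro sum.cong refl) auto
  then show ?thesis by simp
qed

lemma R_map_unit:
  fixes z :: "'n::finite \<Rightarrow> 'n \<Rightarrow> complex"
  shows "R_map z (unit_mat i j) $ k $ l
     = (if k = l then (if i = j \<and> k \<noteq> i then 1 else 0)
        else if k = i \<and> l = j then - z k l else 0) / (of_nat CARD('n) - 1)"
proof (cases "k = l")
  case True
  then show ?thesis unfolding R_map_def trace_unit_mat by (simp add: unit_mat_def, blast)
qed (simp add: R_map_def unit_mat_def)

lemma W_z_eq_core:
  fixes z :: "'n::finite \<Rightarrow> 'n \<Rightarrow> complex"
  shows "W_z z = (1 / (real CARD('n) * (real CARD('n) - 1))) *\<^sub>R witness_core (\<lambda>_ _. 1) z"
proof -
  have entry: "(if k = l then (if i = j \<and> k \<noteq> i then 1 else 0)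
        else if k = i \<and> l = j then - z k l else 0) = witness_core (\<lambda>_ _. 1) z $ (i, k) $ (j, l)"
    for i k j l :: 'n
    unfolding witness_core_entry by (cases "i = j"; cases "k = l"; cases "i = k"; simp)
  have "W_z z $ (i, k) $ (j, l)
      = witness_core (\<lambda>_ _. 1) z $ (i, k) $ (j, l) / ((of_nat CARD('n) - 1) * of_nat CARD('n))"
    for i k j l
    unfolding W_z_def by (simp only: vec_lambda_beta fst_conv snd_conv R_map_unit entry
        divide_divide_eq_left)
  then show ?thesis
    by (simp add: vec_eq_iff scaleR_conv_of_real[where 'a=complex] mult.commute)
qed

lemma qform_witness_core_product:
  "qform (witness_core d z) (tensor_vec x y)
     = (\<Sum>i\<in>UNIV. \<Sum>k\<in>UNIV. if i \<noteq> k
          then complex_of_real (d i k) * (cnj (x $ i * y $ k) * (x $ i * y $ k)) else 0)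
     - (\<Sum>i\<in>UNIV. \<Sum>j\<in>UNIV. if i \<noteq> j
          then z i j * (cnj (x $ i * y $ i) * (x $ j * y $ j)) else 0)"
proof -
  have local_part:
    "qform (diag_mat (\<lambda>b. if fst b \<noteq> snd b then complex_of_real (d (fst b) (snd b)) else 0))
        (tensor_vec x y)
      = (\<Sum>i\<in>UNIV. \<Sum>k\<in>UNIV. if i \<noteq> k
          then complex_of_real (d i k) * (cnj (x $ i * y $ k) * (x $ i * y $ k)) else 0)"
    unfolding qform_diag_mat sum_UNIV_pair tensor_vec_def by (intro sum.cong refl) simp
  have coupling_part:
    "qform (diagonal_coupling (\<lambda>i j. if i \<noteq> j then - z i j else 0)) (tensor_vec x y)
      = - (\<Sum>i\<in>UNIV. \<Sum>j\<in>UNIV. if i \<noteq> j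
          then z i j * (cnj (x $ i * y $ i) * (x $ j * y $ j)) else 0)"
    unfolding qform_diagonal_coupling tensor_vec_def sum_negf[symmetric]
    by (intro sum.cong refl) (simp add: algebra_simps)
  show ?thesis
    unfolding witness_core_def qform_add local_part coupling_part by simp
qed

text \<open>Block positivity: if |z_ij|^2 \<le> d_ij d_ji, each coupling term is dominated by the
  average of the two matching local terms (weighted AM-GM).\<close>
lemma weighted_amgm:
  fixes a b t A B :: real
  assumes "a \<ge> 0" "b \<ge> 0" "t \<ge> 0" "t\<^sup>2 \<le> a * b"
  shows "2 * t * A * B \<le> a * A\<^sup>2 + b * B\<^sup>2"
proof (cases "a = 0")
  case True
  then have "t\<^sup>2 = 0" using assms by (simp add: antisym)
  then have "t = 0" by simp
  then show ?thesis using True assms by simp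
next
  case False
  then have "a > 0" using assms by simp
  have "t\<^sup>2 * B\<^sup>2 \<le> a * b * B\<^sup>2" using assms by (simp add: mult_right_mono)
  then have "(a * A - t * B)\<^sup>2 \<le> a * (a * A\<^sup>2 + b * B\<^sup>2 - 2 * t * A * B)"
    by (simp add: power2_eq_square algebra_simps)
  then have "0 \<le> a * (a * A\<^sup>2 + b * B\<^sup>2 - 2 * t * A * B)"
    using zero_le_power2[of "a * A - t * B"] by linarith
  then show ?thesis using \<open>a > 0\<close> by (simp add: zero_le_mult_iff)
qed

lemma coupling_term_bound:
  fixes w xi yi xj yj :: complex and a b :: real
  assumes "a \<ge> 0" "b \<ge> 0" "(cmod w)\<^sup>2 \<le> a * b"
  shows "Re (w * (cnj (xi * yi) * (xj * yj)))
           \<le> (a * (cmod (xi * yj))\<^sup>2 + b * (cmod (xj * yi))\<^sup>2) / 2"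
proof -
  have "Re (w * (cnj (xi * yi) * (xj * yj))) \<le> cmod (w * (cnj (xi * yi) * (xj * yj)))"
    by (rule complex_Re_le_cmod)
  also have "\<dots> = cmod w * cmod (xi * yj) * cmod (xj * yi)"
    by (simp add: norm_mult)
  also have "\<dots> \<le> (a * (cmod (xi * yj))\<^sup>2 + b * (cmod (xj * yi))\<^sup>2) / 2"
    using weighted_amgm[OF assms(1,2) norm_ge_zero assms(3), of "cmod (xi * yj)" "cmod (xj * yi)"]
    by (simp add: algebra_simps)
  finally show ?thesis .
qed

lemma witness_core_block_positive:
  assumes d_nonneg: "\<And>i k. i \<noteq> k \<Longrightarrow> d i k \<ge> 0"
    and z_bound: "\<And>i j. i \<noteq> j \<Longrightarrow> (cmod (z i j))\<^sup>2 \<le> d i j * d j i"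
  shows "Re (qform (witness_core d z) (tensor_vec x y)) \<ge> 0"
proof -
  define F where "F i k = (if i \<noteq> k then d i k * (cmod (x $ i * y $ k))\<^sup>2 else 0)" for i k
  define G where "G i j = (if i \<noteq> j then Re (z i j * (cnj (x $ i * y $ i) * (x $ j * y $ j))) else 0)"
    for i j
  have local_part: "Re (\<Sum>i\<in>UNIV. \<Sum>k\<in>UNIV. if i \<noteq> k
      then complex_of_real (d i k) * (cnj (x $ i * y $ k) * (x $ i * y $ k)) else 0)
      = (\<Sum>i\<in>UNIV. \<Sum>k\<in>UNIV. F i k)"
    unfolding F_def Re_sum
    by (intro sum.cong refl) (simp add: cnj_mult_self del: complex_cnj_mult)
  have coupling_part: "Re (\<Sum>i\<in>UNIV. \<Sum>j\<in>UNIV. if i \<noteq> j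
      then z i j * (cnj (x $ i * y $ i) * (x $ j * y $ j)) else 0)
      = (\<Sum>i\<in>UNIV. \<Sum>j\<in>UNIV. G i j)"
    unfolding G_def Re_sum by (intro sum.cong refl) simp
  have "G i j \<le> (F i j + F j i) / 2" for i j
    unfolding G_def F_def
    using coupling_term_bound[where a="d i j" and b="d j i" and w="z i j" and xi="x $ i"
        and yi="y $ i" and xj="x $ j" and yj="y $ j"]
      d_nonneg[of i j] d_nonneg[of j i] z_bound[of i j] by auto
  then have "(\<Sum>i\<in>UNIV. \<Sum>j\<in>UNIV. G i j) \<le> (\<Sum>i\<in>UNIV. \<Sum>j\<in>UNIV. (F i j + F j i) / 2)"
    by (intro sum_mono)
  also have "\<dots> = (\<Sum>i\<in>UNIV. \<Sum>j\<in>UNIV. F i j)"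
    by (simp add: sum.distrib sum_divide_distrib[symmetric] sum.swap[of "\<lambda>i j. F j i"])
  finally show ?thesis
    unfolding qform_witness_core_product minus_complex.sel(1) local_part coupling_part by simp
qed

definition two_site :: "'n::finite \<Rightarrow> 'n \<Rightarrow> complex \<Rightarrow> complex ^ 'n" where
  "two_site p q s = (\<chi> i. if i = p then 1 else if i = q then s else 0)"

lemma qform_witness_core_two_site:
  assumes pq: "p \<noteq> q"
  shows "qform (witness_core d z) (tensor_vec (two_site p q s) (two_site p q t))
     = complex_of_real (d p q) * (cnj t * t) + complex_of_real (d q p) * (cnj s * s)
       - (z p q * (s * t) + z q p * (cnj s * cnj t))"
proof -
  let ?x = "two_site p q s" and ?y = "two_site p q t"
  have outside: "?x $ i = 0" "?y $ i = 0" if "i \<noteq> p" "i \<noteq> q" for i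
    using that by (simp_all add: two_site_def)
  define L where "L i k = (if i \<noteq> k
      then complex_of_real (d i k) * (cnj (?x $ i * ?y $ k) * (?x $ i * ?y $ k)) else 0)" for i k
  define C where "C i j = (if i \<noteq> j
      then z i j * (cnj (?x $ i * ?y $ i) * (?x $ j * ?y $ j)) else 0)" for i j
  have L_sum: "(\<Sum>i\<in>UNIV. \<Sum>k\<in>UNIV. L i k) = L p p + L p q + (L q p + L q q)"
    by (rule sum_UNIV_two_square[OF pq]) (auto simp: L_def outside)
  have C_sum: "(\<Sum>i\<in>UNIV. \<Sum>j\<in>UNIV. C i j) = C p p + C p q + (C q p + C q q)"
    by (rule sum_UNIV_two_square[OF pq]) (auto simp: C_def outside)
  show ?thesis
    unfolding qform_witness_core_product L_def[symmetric] C_def[symmetric] L_sum C_sum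
    using pq by (simp add: L_def C_def two_site_def)
qed

lemma mult_vec_two_site:
  assumes pq: "p \<noteq> q"
  shows "(Q *v tensor_vec (two_site p q s) (two_site p q t)) $ a
     = Q $ a $ (p, p) + Q $ a $ (p, q) * t + Q $ a $ (q, p) * s + Q $ a $ (q, q) * (s * t)"
proof -
  define f where "f b = Q $ a $ b * tensor_vec (two_site p q s) (two_site p q t) $ b" for b
  have "(\<Sum>b\<in>UNIV. f b) = f (p, p) + f (p, q) + (f (q, p) + f (q, q))"
    unfolding sum_UNIV_pair
    by (rule sum_UNIV_two_square[OF pq]) (auto simp: f_def tensor_vec_def two_site_def)
  then show ?thesis
    using pq by (simp add: matrix_vector_mult_def f_def[symmetric])
      (simp add: f_def tensor_vec_def two_site_def algebra_simps)
qed

lemma witness_core_two_site_zero: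
  assumes pq: "p \<noteq> q" and unimodular: "cmod (z p q) = 1" and herm: "z q p = cnj (z p q)"
  shows "qform (witness_core (\<lambda>_ _. 1) z)
      (tensor_vec (two_site p q s) (two_site p q (cnj (z p q * s)))) = 0"
proof -
  have "z p q * cnj (z p q) = 1"
    using unimodular by (simp add: complex_norm_square[symmetric])
  then show ?thesis
    unfolding qform_witness_core_two_site[OF pq] herm
    by (simp add: algebra_simps)
qed

lemma witness_core_indefinite:
  fixes z :: "'n::finite \<Rightarrow> 'n \<Rightarrow> complex"
  assumes pq: "p \<noteq> q" and nonzero: "z p q \<noteq> 0" and herm: "z q p = cnj (z p q)"
  shows "\<exists>v. Re (qform (witness_core d z) v) < 0"
proof -
  define v :: "complex ^ ('n \<times> 'n)" where
    "v = (\<chi> b. if b = (p, p) then 1 else if b = (q, q) then cnj (z p q) else 0)"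
  have "qform (witness_core d z) v
      = (\<Sum>b\<in>UNIV. \<Sum>c\<in>UNIV. cnj (v $ b) * witness_core d z $ b $ c * v $ c)"
    by (simp add: qform_def)
  also have "\<dots> = - z p q * cnj (z p q) - cnj (z p q) * z p q"
    using pq
    by (subst sum_UNIV_two_square[of "(p, p)" "(q, q)"]) (auto simp: v_def witness_core_entry herm)
  also have "\<dots> = - 2 * complex_of_real ((cmod (z p q))\<^sup>2)"
    by (simp add: cnj_mult_self mult.commute[of "z p q"])
  finally show ?thesis using nonzero by (intro exI[of _ v]) simp
qed

lemma witness_scale_pos:
  assumes "CARD('n::finite) \<ge> 2"
  shows "1 / (real CARD('n) * (real CARD('n) - 1)) > 0"
  using assms by (simp add: mult_pos_pos)

lemma W_z_block_positive:
  fixes z :: "'n::finite \<Rightarrow> 'n \<Rightarrow> complex"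
  assumes n2: "CARD('n) \<ge> 2" and bounded: "\<And>i j. i \<noteq> j \<Longrightarrow> cmod (z i j) \<le> 1"
  shows "Re (qform (W_z z) (tensor_vec x y)) \<ge> 0"
proof -
  have "Re (qform (witness_core (\<lambda>_ _. 1) z) (tensor_vec x y)) \<ge> 0"
    by (rule witness_core_block_positive) (simp_all add: bounded power_le_one)
  then show ?thesis
    unfolding W_z_eq_core qform_scaleR using witness_scale_pos[OF n2] by simp
qed

lemma W_z_entanglement_witness:
  fixes z :: "'n::finite \<Rightarrow> 'n \<Rightarrow> complex"
  assumes n2: "CARD('n) \<ge> 2"
    and bounded: "\<And>i j. i \<noteq> j \<Longrightarrow> cmod (z i j) \<le> 1"
    and herm: "\<And>i j. i \<noteq> j \<Longrightarrow> z j i = cnj (z i j)"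
    and pq: "p \<noteq> q" and nonzero: "z p q \<noteq> 0"
  shows "ent_witness (W_z z)"
proof -
  obtain v where "Re (qform (witness_core (\<lambda>_ _. 1) z) v) < 0"
    using witness_core_indefinite[OF pq nonzero herm[OF pq]] by blast
  then have "Re (qform (W_z z) v) < 0"
    unfolding W_z_eq_core qform_scaleR using witness_scale_pos[OF n2] by (simp add: divide_neg_pos)
  then have "\<not> psd_mat (W_z z)" unfolding psd_mat_def by (meson not_le)
  moreover have "hermitian_mat (W_z z)"
    unfolding W_z_eq_core by (intro hermitian_scaleR hermitian_witness_core herm)
  ultimately show ?thesis
    using W_z_block_positive[OF n2 bounded] by (simp add: ent_witness_def)
qed

text \<open>Sufficiency: for unimodular z, a positive Q with W^(z) - Q still block positive must
  annihilate every product vector on which W^(z) vanishes; choosing s = 0, 1, i shows that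
  all columns of Q vanish.\<close>
lemma W_z_no_psd_below:
  fixes z :: "'n::finite \<Rightarrow> 'n \<Rightarrow> complex" and Q :: "complex ^ ('n \<times> 'n) ^ ('n \<times> 'n)"
  assumes n2: "CARD('n) \<ge> 2"
    and herm: "\<And>i j. i \<noteq> j \<Longrightarrow> z j i = cnj (z i j)"
    and unimodular: "\<And>i j. i \<noteq> j \<Longrightarrow> cmod (z i j) = 1"
    and psd: "psd_mat Q"
    and block_pos: "\<And>x y. Re (qform (W_z z - Q) (tensor_vec x y)) \<ge> 0"
  shows "Q = 0"
proof -
  have annihilated: "Q $ a $ (p, p) + Q $ a $ (p, q) * cnj (z p q * s) + Q $ a $ (q, p) * s
      + Q $ a $ (q, q) * (s * cnj (z p q * s)) = 0"
    if pq: "p \<noteq> q" for p q s a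
  proof -
    let ?v = "tensor_vec (two_site p q s) (two_site p q (cnj (z p q * s)))"
    have "qform (W_z z) ?v = 0"
      unfolding W_z_eq_core qform_scaleR
      using witness_core_two_site_zero[OF pq unimodular[OF pq] herm[OF pq]] by simp
    then have "Re (qform Q ?v) \<le> 0"
      using block_pos[of "two_site p q s" "two_site p q (cnj (z p q * s))"]
      unfolding qform_diff by simp
    then have "(Q *v ?v) $ a = 0" using psd_kernel[OF psd] by simp
    then show ?thesis unfolding mult_vec_two_site[OF pq] .
  qed
  have diagonal: "Q $ a $ (p, p) = 0" if "p \<noteq> q" for p q a
    using annihilated[OF that, where s=0 and a=a] by simp
  have off_diagonal: "Q $ a $ (q, p) = 0" if pq: "p \<noteq> q" for p q a
  proof -
    have "Q $ a $ (p, q) * cnj (z p q) + Q $ a $ (q, p) = 0"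
      using annihilated[OF pq, where s=1 and a=a] diagonal[OF pq] diagonal[of q p] pq by simp
    moreover have "Q $ a $ (p, q) * (- \<i> * cnj (z p q)) + Q $ a $ (q, p) * \<i> = 0"
      using annihilated[OF pq, where s=\<i> and a=a] diagonal[OF pq] diagonal[of q p] pq by simp
    moreover have "2 * Q $ a $ (q, p) = (Q $ a $ (p, q) * cnj (z p q) + Q $ a $ (q, p))
        - \<i> * (Q $ a $ (p, q) * (- \<i> * cnj (z p q)) + Q $ a $ (q, p) * \<i>)"
      by (simp add: algebra_simps)
    ultimately have "2 * Q $ a $ (q, p) = 0" by (simp only: diff_zero mult_zero_right)
    then show ?thesis by simp
  qed
  have "Q $ a $ (i, k) = 0" for a i k
  proof (cases "i = k")
    case True
    obtain q where "q \<noteq> i" using exists_other[OF n2] by blast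
    then show ?thesis using diagonal[of i q a] True by simp
  next
    case False
    then show ?thesis using off_diagonal[of k i a] by simp
  qed
  then show ?thesis by (simp add: vec_eq_iff)
qed

text \<open>Necessity: if |z_pq| < 1, lowering the weight d_pq from 1 to |z_pq|^2 keeps the
  core block positive, so a positive multiple of |pq><pq| can be subtracted from W^(z).\<close>
lemma witness_core_minus_point:
  assumes "p \<noteq> q"
  shows "witness_core d z - point_mat (p, q) e
       = witness_core (\<lambda>i k. if i = p \<and> k = q then d p q - e else d i k) z"
proof -
  have "(witness_core d z - point_mat (p, q) e) $ (i, k) $ (j, l)
      = witness_core (\<lambda>i k. if i = p \<and> k = q then d p q - e else d i k) z $ (i, k) $ (j, l)"
    for i k j l
    using assms by (auto simp: witness_core_entry point_mat_def)
  then show ?thesis by (simp add: vec_eq_iff)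
qed

lemma W_z_reducible:
  fixes z :: "'n::finite \<Rightarrow> 'n \<Rightarrow> complex"
  assumes n2: "CARD('n) \<ge> 2"
    and bounded: "\<And>i j. i \<noteq> j \<Longrightarrow> cmod (z i j) \<le> 1"
    and herm: "\<And>i j. i \<noteq> j \<Longrightarrow> z j i = cnj (z i j)"
    and pq: "p \<noteq> q" and strict: "cmod (z p q) < 1"
  obtains Q where "psd_mat Q" "Q \<noteq> 0" "hermitian_mat (W_z z - Q)"
    "\<And>x y. Re (qform (W_z z - Q) (tensor_vec x y)) \<ge> 0"
proof -
  define c where "c = 1 / (real CARD('n) * (real CARD('n) - 1))"
  define e where "e = 1 - (cmod (z p q))\<^sup>2"
  define d where "d i k = (if i = p \<and> k = q then 1 - e else 1)" for i k
  have "c > 0" unfolding c_def by (rule witness_scale_pos[OF n2])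
  moreover have "e > 0" using strict by (simp add: e_def power_less_one_iff abs_less_iff)
  ultimately have "psd_mat (point_mat (p, q) (c * e))" "point_mat (p, q) (c * e) \<noteq> 0"
    by (simp_all add: psd_point_mat point_mat_nonzero)
  have reduced: "W_z z - point_mat (p, q) (c * e) = c *\<^sub>R witness_core d z"
    unfolding W_z_eq_core c_def[symmetric] scaleR_point_mat[symmetric]
      scaleR_right_diff_distrib[symmetric] witness_core_minus_point[OF pq]
    by (simp add: d_def[abs_def])
  have "(cmod (z i j))\<^sup>2 \<le> d i j * d j i" if "i \<noteq> j" for i j
    using bounded[OF that] herm[OF pq] pq by (auto simp: d_def e_def power_le_one)
  then have "Re (qform (W_z z - point_mat (p, q) (c * e)) (tensor_vec x y)) \<ge> 0" for x y
    unfolding reduced qform_scaleR using \<open>c > 0\<close>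
    by (simp add: witness_core_block_positive d_def e_def)
  moreover have "hermitian_mat (W_z z - point_mat (p, q) (c * e))"
    unfolding reduced by (intro hermitian_scaleR hermitian_witness_core herm)
  ultimately show ?thesis using that \<open>psd_mat _\<close> \<open>point_mat _ _ \<noteq> 0\<close> by blast
qed

theorem mainTheorem4:
  fixes z :: "'n::finite \<Rightarrow> 'n \<Rightarrow> complex"
  assumes "CARD('n) \<ge> 2"
    and "\<And>i j. i \<noteq> j \<Longrightarrow> cmod (z i j) \<le> 1"
    and "\<And>i j. i \<noteq> j \<Longrightarrow> z j i = cnj (z i j)"
  shows "optimal_witness (W_z z) \<longleftrightarrow> (\<forall>i j. i \<noteq> j \<longrightarrow> cmod (z i j) = 1)"
proof
  assume optimal: "optimal_witness (W_z z)"
  show "\<forall>i j. i \<noteq> j \<longrightarrow> cmod (z i j) = 1"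
  proof (intro allI impI, rule ccontr)
    fix i j :: 'n
    assume "i \<noteq> j" and "cmod (z i j) \<noteq> 1"
    then have "cmod (z i j) < 1" using assms(2)[of i j] by simp
    then obtain Q where Q: "psd_mat Q" "Q \<noteq> 0" "hermitian_mat (W_z z - Q)"
        "\<And>x y. Re (qform (W_z z - Q) (tensor_vec x y)) \<ge> 0"
      using W_z_reducible[where z=z and p=i and q=j, OF assms \<open>i \<noteq> j\<close>] by blast
    have "\<not> psd_mat (W_z z - Q)"
      using psd_add[of "W_z z - Q" Q] Q(1) optimal by (auto simp: optimal_witness_def ent_witness_def)
    then have "ent_witness (W_z z - Q)" using Q(3,4) by (simp add: ent_witness_def)
    then show False using optimal Q(1,2) by (auto simp: optimal_witness_def)
  qed
next
  assume unimodular: "\<forall>i j. i \<noteq> j \<longrightarrow> cmod (z i j) = 1"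
  obtain p q :: 'n where "p \<noteq> q" using exists_other[OF assms(1)] by blast
  then have "ent_witness (W_z z)"
    using W_z_entanglement_witness[OF assms] unimodular by force
  moreover have "\<not> ent_witness (W_z z - Q)" if "psd_mat Q" "Q \<noteq> 0" for Q
    using W_z_no_psd_below[where z=z and Q=Q, OF assms(1,3) _ that(1)] unimodular that(2)
    by (auto simp: ent_witness_def)
  ultimately show "optimal_witness (W_z z)" by (simp add: optimal_witness_def)
qed

end
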